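(* Let $p$ be a prime, $n\ge1$, and let $C=\langle a\rangle$ be a cyclic group of order $p^n$. Let $H$ be a finite group acting on $C$ by group automorphisms, and let $Ha$ denote the $H$-orbit of the generator $a$. Then $m_{\mathsf{faithful}}(C\rtimes H)\ge |Ha|$. Moreover, equality holds if $H$ acts faithfully on $C$.
   Context: For a finite group $G$, $m_{\mathsf{faithful}}(G)$ denotes the smallest dimension of a faithful complex representation of $G$. *)

theory Defs
  imports "HOL-Algebra.Algebra" "Jordan_Normal_Form.Matrix"
begin

text \<open>A d-dimensional complex representation of a group G: a homomorphism
  into GL_d(C), i.e. a map into d x d complex matrices that is multiplicative
  and sends the identity to the identity matrix (hence lands in invertible matrices).\<close>
definition complex_rep :: "('g, 'b) monoid_scheme \<Rightarrow> nat \<Rightarrow> ('g \<Rightarrow> complex mat) \<Rightarrow> bool" where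
  "complex_rep G d \<rho> \<longleftrightarrow>
     (\<forall>g \<in> carrier G. \<rho> g \<in> carrier_mat d d) \<and>
     \<rho> \<one>\<^bsub>G\<^esub> = 1\<^sub>m d \<and>
     (\<forall>g \<in> carrier G. \<forall>h \<in> carrier G. \<rho> (g \<otimes>\<^bsub>G\<^esub> h) = \<rho> g * \<rho> h)"

definition faithful_complex_rep :: "('g, 'b) monoid_scheme \<Rightarrow> nat \<Rightarrow> ('g \<Rightarrow> complex mat) \<Rightarrow> bool" where
  "faithful_complex_rep G d \<rho> \<longleftrightarrow> complex_rep G d \<rho> \<and> inj_on \<rho> (carrier G)"

definition m_faithful :: "('g, 'b) monoid_scheme \<Rightarrow> nat" where
  "m_faithful G = (LEAST d. \<exists>\<rho>. faithful_complex_rep G d \<rho>)"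

definition semidirect_prod ::
  "('c, 'x) monoid_scheme \<Rightarrow> ('h, 'y) monoid_scheme \<Rightarrow> ('h \<Rightarrow> 'c \<Rightarrow> 'c) \<Rightarrow> ('c \<times> 'h) monoid" where
  "semidirect_prod C H \<phi> =
     \<lparr> carrier = carrier C \<times> carrier H,
       monoid.mult = (\<lambda>(c1, h1) (c2, h2). (c1 \<otimes>\<^bsub>C\<^esub> \<phi> h1 c2, h1 \<otimes>\<^bsub>H\<^esub> h2)),
       monoid.one = (\<one>\<^bsub>C\<^esub>, \<one>\<^bsub>H\<^esub>) \<rparr>"

end

theory Submission
  imports Defs "Jordan_Normal_Form.Schur_Decomposition" "Jordan_Normal_Form.Spectral_Radius"
    "HOL-Computational_Algebra.Primes"
begin

text \<open>
  Let \<open>x = (a, 1)\<close> and let \<open>\<rho>\<close> be a faithful representation. Then \<open>B = \<rho>(x)^(p^(n-1))\<close> is not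
  the identity but \<open>B^p = 1\<close>, so \<open>\<Sum>l<p. B^l\<close> is singular; triangularizing \<open>\<rho>(x)\<close> shows that
  \<open>\<rho>(x)\<close> has an eigenvalue \<open>\<mu>\<close> with \<open>\<Sum>l<p. \<mu>^(l p^(n-1)) = 0\<close>, i.e. a primitive \<open>p^n\<close>-th root
  of unity. If \<open>h a = a^k\<close>, then \<open>x\<close> and \<open>x^k\<close> are conjugate by \<open>h\<close>, so \<open>\<mu>^k\<close> is an eigenvalue
  too; distinct elements of the orbit \<open>Ha\<close> give distinct eigenvalues, hence \<open>dim \<rho> \<ge> |Ha|\<close>.

  Conversely, fix a primitive \<open>|C|\<close>-th root of unity \<open>\<zeta>\<close> and let \<open>\<chi>\<^sub>b\<close> be the character of \<open>C\<close> with
  \<open>\<chi>\<^sub>b(b) = \<zeta>\<close>. Then \<open>(c, h) e\<^sub>b = \<chi>\<^bsub>hb\<^esub>(c) e\<^bsub>hb\<^esub>\<close> defines a monomial representation on the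
  space with basis \<open>Ha\<close>; it is faithful when \<open>H\<close> acts faithfully, because \<open>h\<close> is determined
  by \<open>h a\<close> and \<open>c\<close> by \<open>\<chi>\<^sub>b(c)\<close>.
\<close>

hide_const (open) Polynomial.order \<comment> \<open>\<open>order\<close> is the order of a group throughout\<close>

section \<open>Triangularization and geometric sums of matrices\<close>

lemma upper_triangular_mult_index:
  assumes A: "A \<in> carrier_mat n n" and B: "B \<in> carrier_mat n n"
    and "upper_triangular A" "upper_triangular B" and ji: "j \<le> i" and i: "i < n"
  shows "(A * B) $$ (i, j) = A $$ (i, i) * B $$ (i, j)"
proof -
  have summand: "A $$ (i, k) * B $$ (k, j) = (if k = i then A $$ (i, i) * B $$ (i, j) else 0)"
    if "k < n" for k
    using assms that upper_triangularD[of A k i] upper_triangularD[of B j k]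
    by (cases k i rule: linorder_cases) auto
  have "(A * B) $$ (i, j) = (\<Sum>k\<in>{0..<n}. A $$ (i, k) * B $$ (k, j))"
    using A B ji i by (simp add: scalar_prod_def)
  also have "\<dots> = (\<Sum>k\<in>{0..<n}. if k = i then A $$ (i, i) * B $$ (i, j) else 0)"
    by (rule sum.cong) (simp_all add: summand)
  also have "\<dots> = A $$ (i, i) * B $$ (i, j)"
    using i by simp
  finally show ?thesis .
qed

lemma upper_triangular_pow:
  assumes A: "A \<in> carrier_mat n n" and "upper_triangular A"
  shows "upper_triangular (A ^\<^sub>m k)" and "i < n \<Longrightarrow> (A ^\<^sub>m k) $$ (i, i) = A $$ (i, i) ^ k"
proof -
  have ut_diag: "upper_triangular (A ^\<^sub>m k) \<and> (\<forall>i<n. (A ^\<^sub>m k) $$ (i, i) = A $$ (i, i) ^ k)"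
  proof (induction k)
    case 0
    show ?case using A by simp
  next
    case (Suc k)
    have Ak: "A ^\<^sub>m k \<in> carrier_mat n n" using A by simp
    note index = upper_triangular_mult_index[OF Ak A _ \<open>upper_triangular A\<close>]
    have "upper_triangular (A ^\<^sub>m k * A)"
    proof (rule upper_triangularI)
      fix i j assume "j < i" "i < dim_row (A ^\<^sub>m k * A)"
      then show "(A ^\<^sub>m k * A) $$ (i, j) = 0"
        using Suc index[of j i] upper_triangularD[OF \<open>upper_triangular A\<close>, of j i] A by simp
    qed
    moreover have "(A ^\<^sub>m k * A) $$ (i, i) = A $$ (i, i) ^ Suc k" if "i < n" for i
      using Suc index that by (simp add: power_Suc2 del: power_Suc)
    ultimately show ?case by simp
  qed
  show "upper_triangular (A ^\<^sub>m k)" using ut_diag by (rule conjunct1)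
  show "i < n \<Longrightarrow> (A ^\<^sub>m k) $$ (i, i) = A $$ (i, i) ^ k" using ut_diag by simp
qed

fun mat_geom_sum :: "nat \<Rightarrow> 'a::comm_ring_1 mat \<Rightarrow> nat \<Rightarrow> 'a mat" where
  "mat_geom_sum d B 0 = 0\<^sub>m d d"
| "mat_geom_sum d B (Suc l) = mat_geom_sum d B l + B ^\<^sub>m l"

lemma mat_geom_sum_carrier [simp]: "B \<in> carrier_mat d d \<Longrightarrow> mat_geom_sum d B l \<in> carrier_mat d d"
  by (induction l) auto

lemma mat_geom_sum_index:
  assumes "B \<in> carrier_mat d d" and "i < d" and "j < d"
  shows "mat_geom_sum d B l $$ (i, j) = (\<Sum>k<l. (B ^\<^sub>m k) $$ (i, j))"
proof (induction l)
  case (Suc l)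
  have "dim_row (B ^\<^sub>m l) = d" "dim_col (B ^\<^sub>m l) = d" using assms(1) by auto
  then show ?case using Suc assms by simp
qed (use assms in simp)

lemma mat_geom_sum_mult_telescope:
  assumes B: "B \<in> carrier_mat d d"
  shows "mat_geom_sum d B l * B + 1\<^sub>m d = mat_geom_sum d B l + B ^\<^sub>m l"
proof (induction l)
  case (Suc l)
  let ?S = "mat_geom_sum d B l"
  have carr: "?S \<in> carrier_mat d d" "B ^\<^sub>m l \<in> carrier_mat d d" "?S * B \<in> carrier_mat d d"
    "B ^\<^sub>m Suc l \<in> carrier_mat d d"
    using B mult_carrier_mat[OF mat_geom_sum_carrier[OF B] B] by auto
  have "mat_geom_sum d B (Suc l) * B + 1\<^sub>m d = (?S * B + B ^\<^sub>m Suc l) + 1\<^sub>m d"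
    using add_mult_distrib_mat[OF carr(1,2) B] by simp
  also have "\<dots> = ?S * B + (1\<^sub>m d + B ^\<^sub>m Suc l)"
    by (simp only: assoc_add_mat[OF carr(3,4) one_carrier_mat] comm_add_mat[OF carr(4) one_carrier_mat])
  also have "\<dots> = (?S * B + 1\<^sub>m d) + B ^\<^sub>m Suc l"
    using carr by simp
  also have "\<dots> = mat_geom_sum d B (Suc l) + B ^\<^sub>m Suc l"
    using Suc by simp
  finally show ?case .
qed (use B in simp)

lemma similar_mat_wit_geom_sum:
  assumes B: "B \<in> carrier_mat d d" and sim: "similar_mat_wit B U P Q"
  shows "similar_mat_wit (mat_geom_sum d B l) (mat_geom_sum d U l) P Q"
proof -
  have U: "U \<in> carrier_mat d d" and P: "P \<in> carrier_mat d d" and Q: "Q \<in> carrier_mat d d"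
    and PQ: "P * Q = 1\<^sub>m d" "Q * P = 1\<^sub>m d"
    using similar_mat_witD2[OF B sim] by auto
  have conj: "mat_geom_sum d B l = P * mat_geom_sum d U l * Q"
  proof (induction l)
    case 0
    show ?case using P Q by simp
  next
    case (Suc l)
    have "mat_geom_sum d B (Suc l) = P * mat_geom_sum d U l * Q + P * U ^\<^sub>m l * Q"
      by (simp only: mat_geom_sum.simps Suc similar_mat_wit_pow_id[OF sim])
    also have "\<dots> = P * mat_geom_sum d U (Suc l) * Q"
    proof -
      have S: "mat_geom_sum d U l \<in> carrier_mat d d" and V: "U ^\<^sub>m l \<in> carrier_mat d d"
        using U by auto
      show ?thesis
        by (simp add: mult_add_distrib_mat[OF P S V]
            add_mult_distrib_mat[OF mult_carrier_mat[OF P S] mult_carrier_mat[OF P V] Q])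
    qed
    finally show ?case .
  qed
  show ?thesis
    by (rule similar_mat_witI[OF PQ conj]) (simp_all add: B U P Q)
qed

lemma ex_vec_not_fixed:
  fixes B :: "'a::comm_ring_1 mat"
  assumes B: "B \<in> carrier_mat d d" and nontrivial: "B \<noteq> 1\<^sub>m d"
  obtains u where "u \<in> carrier_vec d" and "B *\<^sub>v u - u \<noteq> 0\<^sub>v d"
proof -
  have "\<exists>j<d. B *\<^sub>v unit_vec d j - unit_vec d j \<noteq> 0\<^sub>v d"
  proof (rule ccontr)
    assume "\<not> ?thesis"
    then have fixed: "B *\<^sub>v unit_vec d j - unit_vec d j = 0\<^sub>v d" if "j < d" for j
      using that by blast
    have "B $$ (i, j) = 1\<^sub>m d $$ (i, j)" if ij: "i < d" "j < d" for i j
    proof -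
      have "(B *\<^sub>v unit_vec d j - unit_vec d j) $ i = 0"
        using fixed[OF ij(2)] ij(1) by simp
      then show ?thesis using B ij by simp
    qed
    then have "B = 1\<^sub>m d" using B by (intro eq_matI) auto
    with nontrivial show False ..
  qed
  then show ?thesis using that unit_vec_carrier by blast
qed

lemma det_mat_geom_sum_eq_0:
  fixes B :: "'a::idom mat"
  assumes B: "B \<in> carrier_mat d d" and period: "B ^\<^sub>m q = 1\<^sub>m d" and nontrivial: "B \<noteq> 1\<^sub>m d"
  shows "det (mat_geom_sum d B q) = 0"
proof -
  let ?S = "mat_geom_sum d B q"
  have S: "?S \<in> carrier_mat d d" using B by simp
  then have dim_S: "dim_row ?S = d" "dim_col ?S = d" by auto
  have "?S * B + 1\<^sub>m d = ?S + 1\<^sub>m d"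
    using mat_geom_sum_mult_telescope[OF B, of q] period by simp
  then have SB: "?S * B = ?S"
  proof (intro eq_matI)
    fix i j assume "i < dim_row ?S" "j < dim_col ?S"
    then have "(?S * B + 1\<^sub>m d) $$ (i, j) = (?S + 1\<^sub>m d) $$ (i, j)" and "i < d" "j < d"
      using \<open>?S * B + 1\<^sub>m d = ?S + 1\<^sub>m d\<close> S by auto
    then show "(?S * B) $$ (i, j) = ?S $$ (i, j)" using B dim_S by simp
  qed (use B dim_S in auto)
  obtain u where u: "u \<in> carrier_vec d" and moved: "B *\<^sub>v u - u \<noteq> 0\<^sub>v d"
    using ex_vec_not_fixed[OF B nontrivial] by blast
  have "?S *\<^sub>v (B *\<^sub>v u - u) = ?S *\<^sub>v (B *\<^sub>v u) - ?S *\<^sub>v u"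
    by (rule mult_minus_distrib_mat_vec[OF S _ u]) (use B u in simp)
  also have "?S *\<^sub>v (B *\<^sub>v u) = ?S *\<^sub>v u"
    using assoc_mult_mat_vec[OF S B u] SB by simp
  also have "?S *\<^sub>v u - ?S *\<^sub>v u = 0\<^sub>v d" using S u by simp
  finally show ?thesis
    using det_0_iff_vec_prod_zero[OF S] moved B u by (meson minus_carrier_vec mult_mat_vec_carrier)
qed

lemma mat_geom_sum_upper_triangular:
  assumes U: "U \<in> carrier_mat d d" and ut: "upper_triangular U"
  shows "upper_triangular (mat_geom_sum d U l)"
    and "i < d \<Longrightarrow> mat_geom_sum d U l $$ (i, i) = (\<Sum>k<l. U $$ (i, i) ^ k)"
proof -
  show "upper_triangular (mat_geom_sum d U l)"
  proof (rule upper_triangularI)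
    fix i j assume "j < i" "i < dim_row (mat_geom_sum d U l)"
    moreover have "i < d" using calculation mat_geom_sum_carrier[OF U, of l] by simp
    moreover have "(U ^\<^sub>m k) $$ (i, j) = 0" if "j < i" "i < d" for k
      using upper_triangularD[OF upper_triangular_pow(1)[OF U ut]] U that by simp
    ultimately show "mat_geom_sum d U l $$ (i, j) = 0"
      using mat_geom_sum_index[OF U] by simp
  qed
  show "i < d \<Longrightarrow> mat_geom_sum d U l $$ (i, i) = (\<Sum>k<l. U $$ (i, i) ^ k)"
    using mat_geom_sum_index[OF U] upper_triangular_pow(2)[OF U ut] by simp
qed

lemma complex_mat_triangularization:
  fixes A :: "complex mat"
  assumes A: "A \<in> carrier_mat d d"
  obtains T P Q where "similar_mat_wit A T P Q" "upper_triangular T" "T \<in> carrier_mat d d"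
    "\<And>i. i < d \<Longrightarrow> eigenvalue A (T $$ (i, i))"
proof -
  obtain es where es: "char_poly A = (\<Prod>e\<leftarrow>es. [:- e, 1:])" "length es = d"
    using char_poly_factorized[OF A] by blast
  obtain T P Q where schur: "schur_decomposition A es = (T, P, Q)"
    by (cases "schur_decomposition A es") auto
  from schur_decomposition[OF A es(1) schur]
  have sim: "similar_mat_wit A T P Q" and ut: "upper_triangular T" and diag: "diag_mat T = es"
    by auto
  have T: "T \<in> carrier_mat d d" using similar_mat_witD2[OF A sim] by auto
  have "eigenvalue A (T $$ (i, i))" if i: "i < d" for i
  proof -
    have "T $$ (i, i) = es ! i" using diag i T by (auto simp: diag_mat_def)
    then have "poly (char_poly A) (T $$ (i, i)) = 0"
      unfolding es(1) poly_prod_list using i es(2) by auto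
    then show ?thesis using eigenvalue_root_char_poly[OF A] by simp
  qed
  with that sim ut T show ?thesis by blast
qed

lemma ex_eigenvalue_geom_sum_eq_0:
  fixes A :: "complex mat"
  assumes A: "A \<in> carrier_mat d d"
    and period: "(A ^\<^sub>m m) ^\<^sub>m q = 1\<^sub>m d" and nontrivial: "A ^\<^sub>m m \<noteq> 1\<^sub>m d"
  shows "\<exists>\<mu>. eigenvalue A \<mu> \<and> (\<Sum>l<q. (\<mu> ^ m) ^ l) = 0"
proof -
  obtain T P Q where sim: "similar_mat_wit A T P Q" and ut: "upper_triangular T"
    and T: "T \<in> carrier_mat d d" and ev: "\<And>i. i < d \<Longrightarrow> eigenvalue A (T $$ (i, i))"
    using complex_mat_triangularization[OF A] by blast
  let ?U = "T ^\<^sub>m m"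
  have U: "?U \<in> carrier_mat d d" and ut_U: "upper_triangular ?U"
    using T upper_triangular_pow(1)[OF T ut] by auto
  have "similar_mat_wit (mat_geom_sum d (A ^\<^sub>m m) q) (mat_geom_sum d ?U q) P Q"
    using similar_mat_wit_geom_sum[OF _ similar_mat_wit_pow[OF sim]] A by simp
  then have "det (mat_geom_sum d ?U q) = det (mat_geom_sum d (A ^\<^sub>m m) q)"
    using det_similar unfolding similar_mat_def by metis
  also have "\<dots> = 0"
    using det_mat_geom_sum_eq_0[OF _ period nontrivial] A by simp
  finally have "prod_list (diag_mat (mat_geom_sum d ?U q)) = 0"
    using det_upper_triangular[OF mat_geom_sum_upper_triangular(1)[OF U ut_U] mat_geom_sum_carrier[OF U]]
    by simp
  moreover have "dim_row (mat_geom_sum d ?U q) = d" using mat_geom_sum_carrier[OF U] by blast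
  ultimately obtain i where i: "i < d" and "mat_geom_sum d ?U q $$ (i, i) = 0"
    by (auto simp: diag_mat_def)
  then have "(\<Sum>l<q. (T $$ (i, i) ^ m) ^ l) = 0"
    using mat_geom_sum_upper_triangular(2)[OF U ut_U] upper_triangular_pow(2)[OF T ut] by simp
  with ev[OF i] show ?thesis by blast
qed

section \<open>Roots of unity\<close>

definition primitive_root_of_unity :: "nat \<Rightarrow> 'a::monoid_mult \<Rightarrow> bool" where
  "primitive_root_of_unity N z \<longleftrightarrow> (\<forall>j. z ^ j = 1 \<longleftrightarrow> N dvd j)"

lemma primitive_root_of_unity_prime_power:
  fixes x :: "'a::monoid_mult"
  assumes p: "Factorial_Ring.prime p" and root: "x ^ (p ^ Suc k) = 1" and not_root: "x ^ (p ^ k) \<noteq> 1"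
  shows "primitive_root_of_unity (p ^ Suc k) x"
proof -
  have "p ^ Suc k dvd j" if xj: "x ^ j = 1" for j
  proof (cases "j = 0")
    case False
    let ?g = "gcd j (p ^ Suc k)"
    obtain u v where uv: "j * u = p ^ Suc k * v + ?g"
      using bezout_nat[OF False] by blast
    have "x ^ (j * u) = 1" "x ^ (p ^ Suc k * v) = 1"
      using xj root by (simp_all only: power_mult power_one)
    moreover have "x ^ (j * u) = x ^ (p ^ Suc k * v) * x ^ ?g"
      by (simp only: uv power_add)
    ultimately have "x ^ ?g = 1" by simp
    obtain i where i: "i \<le> Suc k" and g: "?g = p ^ i"
      using divides_primepow_nat[OF p, of ?g "Suc k"] gcd_dvd2[of j "p ^ Suc k"] by blast
    show ?thesis
    proof (cases "i = Suc k")
      case False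
      then have "p ^ i dvd p ^ k" using i by (simp add: le_imp_power_dvd)
      then obtain t where "p ^ k = p ^ i * t" by (rule dvdE)
      then have "x ^ (p ^ k) = (x ^ ?g) ^ t" by (simp only: g power_mult)
      with \<open>x ^ ?g = 1\<close> not_root show ?thesis by simp
    qed (use g gcd_dvd1[of j "p ^ Suc k"] in simp)
  qed simp
  moreover have "x ^ j = 1" if dvd: "p ^ Suc k dvd j" for j
  proof -
    obtain t where "j = p ^ Suc k * t" using dvd by blast
    then show ?thesis using root by (simp add: power_mult)
  qed
  ultimately show ?thesis unfolding primitive_root_of_unity_def by blast
qed

lemma ex_primitive_root_of_unity:
  assumes "N > 0"
  shows "\<exists>z::complex. primitive_root_of_unity N z"
proof -
  let ?z = "cis (2 * pi / real N)"
  have "?z ^ j = 1 \<longleftrightarrow> N dvd j" for j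
  proof
    assume "?z ^ j = 1"
    then have "cis (real j * (2 * pi / real N)) = 1"
      by (simp add: DeMoivre)
    then have "cos (real j * (2 * pi / real N)) = 1"
      by (metis cis.sel(1) one_complex.sel(1))
    then obtain t :: int where "real j * (2 * pi / real N) = real_of_int t * 2 * pi"
      using cos_one_2pi_int by blast
    then have "real j = real_of_int t * real N" using assms by (simp add: field_simps)
    then have "int j = t * int N" by (metis of_int_eq_iff of_int_mult of_int_of_nat_eq)
    then show "N dvd j" by (metis dvd_triv_right int_dvd_int_iff)
  next
    assume "N dvd j"
    then obtain t where "j = N * t" by blast
    then have "real j * (2 * pi / real N) = 2 * pi * real t" using assms by (simp add: field_simps)
    then show "?z ^ j = 1" by (simp add: DeMoivre)
  qed
  then show ?thesis unfolding primitive_root_of_unity_def by blast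
qed

lemma primitive_root_of_unity_power_eq_iff:
  fixes z :: "'a::field"
  assumes z: "primitive_root_of_unity N z" and N: "N > 0"
  shows "z ^ k = z ^ k' \<longleftrightarrow> k mod N = k' mod N"
proof -
  have "z \<noteq> 0"
    using z N unfolding primitive_root_of_unity_def by (metis dvd_refl power_0_left zero_neq_one neq0_conv)
  have *: "z ^ k = z ^ k' \<longleftrightarrow> k mod N = k' mod N" if le: "k \<le> k'" for k k'
  proof -
    have "z ^ k' = z ^ k * z ^ (k' - k)"
      using le by (simp flip: power_add)
    then have "z ^ k = z ^ k' \<longleftrightarrow> z ^ (k' - k) = 1"
      using \<open>z \<noteq> 0\<close> by auto
    also have "\<dots> \<longleftrightarrow> k mod N = k' mod N"
      using z mod_eq_dvd_iff_nat[OF le] unfolding primitive_root_of_unity_def by metis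
    finally show ?thesis .
  qed
  show ?thesis using *[of k k'] *[of k' k] by (cases "k \<le> k'") auto
qed

lemma ex_primitive_eigenvalue:
  fixes A :: "complex mat"
  assumes p: "Factorial_Ring.prime p" and A: "A \<in> carrier_mat d d"
    and period: "(A ^\<^sub>m (p ^ k)) ^\<^sub>m p = 1\<^sub>m d" and nontrivial: "A ^\<^sub>m (p ^ k) \<noteq> 1\<^sub>m d"
  shows "\<exists>\<mu>. eigenvalue A \<mu> \<and> primitive_root_of_unity (p ^ Suc k) \<mu>"
proof -
  obtain \<mu> where ev: "eigenvalue A \<mu>" and sum: "(\<Sum>l<p. (\<mu> ^ p ^ k) ^ l) = 0"
    using ex_eigenvalue_geom_sum_eq_0[OF A period nontrivial] by blast
  have "\<mu> ^ p ^ k \<noteq> 1"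
    using sum prime_gt_0_nat[OF p] by auto
  moreover have "(\<mu> ^ p ^ k) ^ p = 1"
    using power_diff_1_eq[of "\<mu> ^ p ^ k" p] sum by simp
  ultimately have "primitive_root_of_unity (p ^ Suc k) \<mu>"
    using primitive_root_of_unity_prime_power[OF p] by (simp add: power_mult power_Suc2 del: power_Suc)
  with ev show ?thesis by blast
qed

section \<open>Complex representations\<close>

text \<open>The matrix of \<open>e\<^sub>z \<mapsto> c z \<cdot> e\<^bsub>s z\<^esub>\<close>, where \<open>e\<^bsub>f i\<^esub>\<close> is the \<open>i\<close>-th standard basis vector.\<close>

definition monomial_mat :: "nat \<Rightarrow> (nat \<Rightarrow> 'z) \<Rightarrow> ('z \<Rightarrow> 'z) \<Rightarrow> ('z \<Rightarrow> 'a::semiring_1) \<Rightarrow> 'a mat" where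
  "monomial_mat N f s c = mat N N (\<lambda>(i, j). if f i = s (f j) then c (f j) else 0)"

lemma monomial_mat_carrier [simp]: "monomial_mat N f s c \<in> carrier_mat N N"
  unfolding monomial_mat_def by simp

lemma monomial_mat_mult:
  assumes f: "bij_betw f {0..<N} Z" and s2: "\<And>z. z \<in> Z \<Longrightarrow> s2 z \<in> Z"
  shows "monomial_mat N f s1 c1 * monomial_mat N f s2 c2 =
         monomial_mat N f (\<lambda>z. s1 (s2 z)) (\<lambda>z. c1 (s2 z) * c2 z)"
proof (rule eq_matI)
  fix i j assume "i < dim_row (monomial_mat N f (\<lambda>z. s1 (s2 z)) (\<lambda>z. c1 (s2 z) * c2 z))"
    and "j < dim_col (monomial_mat N f (\<lambda>z. s1 (s2 z)) (\<lambda>z. c1 (s2 z) * c2 z))"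
  then have i: "i < N" and j: "j < N" by (auto simp: monomial_mat_def)
  have "s2 (f j) \<in> f ` {0..<N}"
    using f s2 j unfolding bij_betw_def by auto
  then obtain k0 where k0: "k0 < N" "f k0 = s2 (f j)" by auto
  have only_k0: "f k = s2 (f j) \<longleftrightarrow> k = k0" if "k < N" for k
    using f k0 that unfolding bij_betw_def inj_on_def by auto
  let ?a = "\<lambda>k. if f i = s1 (f k) then c1 (f k) else 0"
  have "(monomial_mat N f s1 c1 * monomial_mat N f s2 c2) $$ (i, j) =
     (\<Sum>k\<in>{0..<N}. ?a k * (if f k = s2 (f j) then c2 (f j) else 0))"
    using i j by (simp add: monomial_mat_def scalar_prod_def)
  also have "\<dots> = (\<Sum>k\<in>{0..<N}. if k = k0 then ?a k0 * c2 (f j) else 0)"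
    by (rule sum.cong) (simp_all add: only_k0)
  also have "\<dots> = monomial_mat N f (\<lambda>z. s1 (s2 z)) (\<lambda>z. c1 (s2 z) * c2 z) $$ (i, j)"
    using i j k0 by (simp add: monomial_mat_def)
  finally show "(monomial_mat N f s1 c1 * monomial_mat N f s2 c2) $$ (i, j) =
      monomial_mat N f (\<lambda>z. s1 (s2 z)) (\<lambda>z. c1 (s2 z) * c2 z) $$ (i, j)" .
qed (simp_all add: monomial_mat_def)

lemma monomial_mat_one:
  assumes f: "bij_betw f {0..<N} Z" and "\<And>z. z \<in> Z \<Longrightarrow> s z = z \<and> c z = 1"
  shows "monomial_mat N f s c = 1\<^sub>m N"
proof (rule eq_matI)
  fix i j assume "i < dim_row (1\<^sub>m N)" "j < dim_col (1\<^sub>m N)"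
  then have i: "i < N" and j: "j < N" by auto
  then have "f j \<in> Z" and "f i = f j \<longleftrightarrow> i = j"
    using f unfolding bij_betw_def inj_on_def by auto
  then show "monomial_mat N f s c $$ (i, j) = 1\<^sub>m N $$ (i, j)"
    using i j assms(2) by (simp add: monomial_mat_def)
qed (auto simp: monomial_mat_def)

lemma monomial_mat_eqD:
  assumes f: "bij_betw f {0..<N} Z" and z: "z \<in> Z" and sz: "s z \<in> Z" and cz: "c z \<noteq> 0"
    and eq: "monomial_mat N f s c = monomial_mat N f s' c'"
  shows "s' z = s z" and "c' z = c z"
proof -
  obtain j where j: "j < N" "f j = z"
    using f z by (metis atLeastLessThan_iff bij_betw_iff_bijections)
  obtain i where i: "i < N" "f i = s z"
    using f sz by (metis atLeastLessThan_iff bij_betw_iff_bijections)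
  have "monomial_mat N f s c $$ (i, j) = c z"
    using i j by (simp add: monomial_mat_def)
  moreover have "monomial_mat N f s' c' $$ (i, j) = (if s z = s' z then c' z else 0)"
    using i j by (simp add: monomial_mat_def)
  ultimately show "s' z = s z" and "c' z = c z" using cz eq by metis+
qed

lemma complex_rep_monomial:
  assumes f: "bij_betw f {0..<N} Z"
    and closed: "\<And>g z. g \<in> carrier G \<Longrightarrow> z \<in> Z \<Longrightarrow> s g z \<in> Z"
    and mult: "\<And>g h z. g \<in> carrier G \<Longrightarrow> h \<in> carrier G \<Longrightarrow> z \<in> Z \<Longrightarrow>
        s (g \<otimes>\<^bsub>G\<^esub> h) z = s g (s h z) \<and> c (g \<otimes>\<^bsub>G\<^esub> h) z = c g (s h z) * c h z"
    and one: "\<And>z. z \<in> Z \<Longrightarrow> s \<one>\<^bsub>G\<^esub> z = z \<and> c \<one>\<^bsub>G\<^esub> z = 1"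
  shows "complex_rep G N (\<lambda>g. monomial_mat N f (s g) (c g))"
  unfolding complex_rep_def
proof (intro conjI ballI)
  show "monomial_mat N f (s \<one>\<^bsub>G\<^esub>) (c \<one>\<^bsub>G\<^esub>) = 1\<^sub>m N"
    using monomial_mat_one[OF f] one by blast
next
  fix g h assume g: "g \<in> carrier G" and h: "h \<in> carrier G"
  have "monomial_mat N f (s g) (c g) * monomial_mat N f (s h) (c h) =
        monomial_mat N f (\<lambda>z. s g (s h z)) (\<lambda>z. c g (s h z) * c h z)"
    using monomial_mat_mult[OF f] closed h by blast
  also have "\<dots> = monomial_mat N f (s (g \<otimes>\<^bsub>G\<^esub> h)) (c (g \<otimes>\<^bsub>G\<^esub> h))"
    using f mult[OF g h] unfolding monomial_mat_def bij_betw_def by (intro eq_matI) auto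
  finally show "monomial_mat N f (s (g \<otimes>\<^bsub>G\<^esub> h)) (c (g \<otimes>\<^bsub>G\<^esub> h)) =
      monomial_mat N f (s g) (c g) * monomial_mat N f (s h) (c h)" by simp
qed simp

lemma ex_faithful_complex_rep:
  assumes G: "monoid G" and fin: "finite (carrier G)"
  shows "\<exists>d \<rho>. faithful_complex_rep G d \<rho>"
proof -
  obtain f where f: "bij_betw f {0..<card (carrier G)} (carrier G)"
    using ex_bij_betw_nat_finite[OF fin] by blast
  let ?\<rho> = "\<lambda>g. monomial_mat (card (carrier G)) f (\<lambda>z. g \<otimes>\<^bsub>G\<^esub> z) (\<lambda>_. 1 :: complex)"
  have "complex_rep G (card (carrier G)) ?\<rho>"
  proof (rule complex_rep_monomial[OF f])
    fix g z assume "g \<in> carrier G" "z \<in> carrier G"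
    then show "g \<otimes>\<^bsub>G\<^esub> z \<in> carrier G" by (rule monoid.m_closed[OF G])
  next
    fix g h z assume "g \<in> carrier G" "h \<in> carrier G" "z \<in> carrier G"
    then show "g \<otimes>\<^bsub>G\<^esub> h \<otimes>\<^bsub>G\<^esub> z = g \<otimes>\<^bsub>G\<^esub> (h \<otimes>\<^bsub>G\<^esub> z) \<and> (1::complex) = 1 * 1"
      using monoid.m_assoc[OF G] by simp
  next
    fix z assume "z \<in> carrier G"
    then show "\<one>\<^bsub>G\<^esub> \<otimes>\<^bsub>G\<^esub> z = z \<and> (1::complex) = 1"
      using monoid.l_one[OF G] by simp
  qed
  moreover have "inj_on ?\<rho> (carrier G)"
  proof (rule inj_onI)
    fix g h assume g: "g \<in> carrier G" and h: "h \<in> carrier G" and eq: "?\<rho> g = ?\<rho> h"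
    have "h \<otimes>\<^bsub>G\<^esub> \<one>\<^bsub>G\<^esub> = g \<otimes>\<^bsub>G\<^esub> \<one>\<^bsub>G\<^esub>"
      using monomial_mat_eqD(1)[OF f monoid.one_closed[OF G] _ _ eq] g G by (simp add: monoid.m_closed)
    then show "g = h" using g h monoid.r_one[OF G] by simp
  qed
  ultimately show ?thesis unfolding faithful_complex_rep_def by blast
qed

lemma complex_rep_pow:
  assumes "monoid G" and rep: "complex_rep G d \<rho>" and g: "g \<in> carrier G"
  shows "\<rho> (g [^]\<^bsub>G\<^esub> k) = \<rho> g ^\<^sub>m k"
proof (induction k)
  case 0
  have "\<rho> g \<in> carrier_mat d d" using rep g unfolding complex_rep_def by blast
  then show ?case using rep unfolding complex_rep_def by simp
next
  case (Suc k)
  have "\<rho> (g [^]\<^bsub>G\<^esub> Suc k) = \<rho> (g [^]\<^bsub>G\<^esub> k) * \<rho> g"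
    using rep g monoid.nat_pow_closed[OF \<open>monoid G\<close> g] unfolding complex_rep_def by simp
  then show ?case using Suc by simp
qed

lemma eigenvalue_pow_of_intertwining:
  fixes A :: "'a::field mat"
  assumes A: "A \<in> carrier_mat d d" and Q: "Q \<in> carrier_mat d d" and R: "R \<in> carrier_mat d d"
    and inv: "R * Q = 1\<^sub>m d" and intertwine: "A * Q = Q * A ^\<^sub>m k" and ev: "eigenvalue A \<mu>"
  shows "eigenvalue A (\<mu> ^ k)"
proof -
  obtain v where v: "eigenvector A v \<mu>" using ev unfolding eigenvalue_def by blast
  then have v_carrier: "v \<in> carrier_vec d" and v_nonzero: "v \<noteq> 0\<^sub>v d"
    using A unfolding eigenvector_def by auto
  have "A *\<^sub>v (Q *\<^sub>v v) = (Q * A ^\<^sub>m k) *\<^sub>v v"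
    using A Q v_carrier intertwine by (simp flip: assoc_mult_mat_vec)
  also have "\<dots> = Q *\<^sub>v (A ^\<^sub>m k *\<^sub>v v)"
    using A Q v_carrier by (simp add: assoc_mult_mat_vec[of _ d d _ d])
  also have "\<dots> = \<mu> ^ k \<cdot>\<^sub>v (Q *\<^sub>v v)"
    using eigenvector_pow[OF A v] Q v_carrier by (simp add: mult_mat_vec)
  finally have "A *\<^sub>v (Q *\<^sub>v v) = \<mu> ^ k \<cdot>\<^sub>v (Q *\<^sub>v v)" .
  moreover have "Q *\<^sub>v v \<noteq> 0\<^sub>v d"
  proof
    assume "Q *\<^sub>v v = 0\<^sub>v d"
    moreover have "R *\<^sub>v 0\<^sub>v d = 0\<^sub>v d"
      using R by (intro eq_vecI) (auto simp: scalar_prod_def)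
    ultimately have "(R * Q) *\<^sub>v v = 0\<^sub>v d" using R Q v_carrier by simp
    with inv v_carrier v_nonzero show False by simp
  qed
  moreover have "Q *\<^sub>v v \<in> carrier_vec d" using Q v_carrier by simp
  ultimately show ?thesis
    using A unfolding eigenvalue_def eigenvector_def by blast
qed

lemma complex_rep_eigenvalue_pow:
  assumes "monoid G" and rep: "complex_rep G d \<rho>"
    and carrier: "x \<in> carrier G" "y \<in> carrier G" "y' \<in> carrier G"
    and inv: "y' \<otimes>\<^bsub>G\<^esub> y = \<one>\<^bsub>G\<^esub>" and conj: "x \<otimes>\<^bsub>G\<^esub> y = y \<otimes>\<^bsub>G\<^esub> x [^]\<^bsub>G\<^esub> k"
    and ev: "eigenvalue (\<rho> x) \<mu>"
  shows "eigenvalue (\<rho> x) (\<mu> ^ k)"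
proof (rule eigenvalue_pow_of_intertwining[OF _ _ _ _ _ ev])
  show "\<rho> x \<in> carrier_mat d d" "\<rho> y \<in> carrier_mat d d" "\<rho> y' \<in> carrier_mat d d"
    using rep carrier unfolding complex_rep_def by auto
  show "\<rho> y' * \<rho> y = 1\<^sub>m d"
    using rep carrier inv unfolding complex_rep_def by metis
  show "\<rho> x * \<rho> y = \<rho> y * \<rho> x ^\<^sub>m k"
    using rep carrier conj complex_rep_pow[OF \<open>monoid G\<close> rep carrier(1)]
    unfolding complex_rep_def by (metis monoid.nat_pow_closed[OF \<open>monoid G\<close>])
qed

section \<open>Semidirect products with a cyclic normal subgroup\<close>

lemma (in group) pow_eq_pow_iff_mod_ord:
  assumes "x \<in> carrier G"
  shows "x [^] (k::nat) = x [^] (k'::nat) \<longleftrightarrow> k mod ord x = k' mod ord x"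
proof -
  have "x [^] k = x [^] k' \<longleftrightarrow> int (ord x) dvd int k' - int k"
    using int_pow_eq[OF assms, of "int k" "int k'"] by (simp add: int_pow_int)
  also have "\<dots> \<longleftrightarrow> k mod ord x = k' mod ord x"
    by (metis mod_eq_dvd_iff of_nat_eq_iff zmod_int)
  finally show ?thesis .
qed

locale semidirect_action = group_action H "carrier C" \<phi> + C: group C
  for C :: "('c, 'x) monoid_scheme" and H :: "('h, 'y) monoid_scheme" and \<phi> +
  assumes action_hom: "h \<in> carrier H \<Longrightarrow> \<phi> h \<in> hom C C"
begin

abbreviation G where "G \<equiv> semidirect_prod C H \<phi>"

sublocale H: group H
  using group_hom group_hom.axioms(1) by blast

lemma action_closed: "h \<in> carrier H \<Longrightarrow> c \<in> carrier C \<Longrightarrow> \<phi> h c \<in> carrier C"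
  using element_image by blast

lemma action_one: "c \<in> carrier C \<Longrightarrow> \<phi> \<one>\<^bsub>H\<^esub> c = c"
  by (metis id_eq_one restrict_apply')

lemma action_group_hom: "h \<in> carrier H \<Longrightarrow> group_hom C C (\<phi> h)"
  using action_hom by (simp add: group_hom_def group_hom_axioms_def)

lemma action_hom_mult:
  "h \<in> carrier H \<Longrightarrow> c \<in> carrier C \<Longrightarrow> c' \<in> carrier C \<Longrightarrow>
    \<phi> h (c \<otimes>\<^bsub>C\<^esub> c') = \<phi> h c \<otimes>\<^bsub>C\<^esub> \<phi> h c'"
  by (rule group_hom.hom_mult[OF action_group_hom])

lemma action_hom_one: "h \<in> carrier H \<Longrightarrow> \<phi> h \<one>\<^bsub>C\<^esub> = \<one>\<^bsub>C\<^esub>"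
  by (rule group_hom.hom_one[OF action_group_hom])

lemma action_hom_pow:
  "h \<in> carrier H \<Longrightarrow> c \<in> carrier C \<Longrightarrow> \<phi> h (c [^]\<^bsub>C\<^esub> (k::nat)) = \<phi> h c [^]\<^bsub>C\<^esub> k"
  by (rule group_hom.hom_nat_pow[OF action_group_hom])

lemma semidirect_carrier [simp]: "carrier G = carrier C \<times> carrier H"
  by (simp add: semidirect_prod_def)

lemma semidirect_mult [simp]:
  "(c, h) \<otimes>\<^bsub>G\<^esub> (c', h') = (c \<otimes>\<^bsub>C\<^esub> \<phi> h c', h \<otimes>\<^bsub>H\<^esub> h')"
  by (simp add: semidirect_prod_def)

lemma semidirect_one [simp]: "\<one>\<^bsub>G\<^esub> = (\<one>\<^bsub>C\<^esub>, \<one>\<^bsub>H\<^esub>)"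
  by (simp add: semidirect_prod_def)

lemma semidirect_monoid: "monoid G"
proof (rule monoidI)
  fix x y z assume "x \<in> carrier G" "y \<in> carrier G" "z \<in> carrier G"
  then obtain c h c' h' c'' h'' where xyz: "x = (c, h)" "y = (c', h')" "z = (c'', h'')"
    and c: "c \<in> carrier C" "c' \<in> carrier C" "c'' \<in> carrier C"
    and h: "h \<in> carrier H" "h' \<in> carrier H" "h'' \<in> carrier H" by auto
  show "x \<otimes>\<^bsub>G\<^esub> y \<otimes>\<^bsub>G\<^esub> z = x \<otimes>\<^bsub>G\<^esub> (y \<otimes>\<^bsub>G\<^esub> z)"
    using c h unfolding xyz
    by (simp add: action_hom_mult action_closed composition_rule C.m_assoc H.m_assoc)
qed (auto simp: action_closed action_one action_hom_one)

lemma semidirect_pow_left: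
  "c \<in> carrier C \<Longrightarrow> (c, \<one>\<^bsub>H\<^esub>) [^]\<^bsub>G\<^esub> (k::nat) = (c [^]\<^bsub>C\<^esub> k, \<one>\<^bsub>H\<^esub>)"
  by (induction k) (simp_all add: action_one)

end

locale cyclic_semidirect_action = semidirect_action +
  fixes a
  assumes generator: "a \<in> carrier C"
    and powers_of_generator: "\<And>c. c \<in> carrier C \<Longrightarrow> \<exists>k::nat. c = a [^]\<^bsub>C\<^esub> k"
    and finite_carrier: "finite (carrier C)"
begin

lemma ord_generator_pos: "C.ord a > 0"
  using C.ord_ge_1[OF finite_carrier generator] by simp

lemma orbit_subset_carrier: "orbit H \<phi> a \<subseteq> carrier C"
  using generator action_closed unfolding orbit_def by blast

lemma finite_orbit: "finite (orbit H \<phi> a)"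
  using finite_subset[OF orbit_subset_carrier finite_carrier] .

lemma orbit_closed:
  assumes h: "h \<in> carrier H" and b: "b \<in> orbit H \<phi> a"
  shows "\<phi> h b \<in> orbit H \<phi> a"
proof -
  obtain h' where h': "h' \<in> carrier H" and "b = \<phi> h' a"
    using b unfolding orbit_def by blast
  then have "\<phi> h b = \<phi> (h \<otimes>\<^bsub>H\<^esub> h') a"
    using composition_rule[OF generator h h'] by simp
  then show ?thesis using h h' unfolding orbit_def by blast
qed

lemma orbit_pow_eq_iff:
  assumes "b \<in> orbit H \<phi> a"
  shows "b [^]\<^bsub>C\<^esub> (k::nat) = b [^]\<^bsub>C\<^esub> (k'::nat) \<longleftrightarrow> k mod C.ord a = k' mod C.ord a"
proof -
  obtain h where h: "h \<in> carrier H" and b: "b = \<phi> h a"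
    using assms unfolding orbit_def by blast
  have "b [^]\<^bsub>C\<^esub> k = b [^]\<^bsub>C\<^esub> k' \<longleftrightarrow> \<phi> h (a [^]\<^bsub>C\<^esub> k) = \<phi> h (a [^]\<^bsub>C\<^esub> k')"
    using b h generator by (simp add: action_hom_pow)
  also have "\<dots> \<longleftrightarrow> a [^]\<^bsub>C\<^esub> k = a [^]\<^bsub>C\<^esub> k'"
    using inj_prop[OF h] generator by (simp add: inj_on_eq_iff)
  also have "\<dots> \<longleftrightarrow> k mod C.ord a = k' mod C.ord a"
    by (rule C.pow_eq_pow_iff_mod_ord[OF generator])
  finally show ?thesis .
qed

lemma powers_of_orbit:
  assumes b: "b \<in> orbit H \<phi> a" and c: "c \<in> carrier C"
  shows "\<exists>k::nat. c = b [^]\<^bsub>C\<^esub> k"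
proof -
  obtain h where h: "h \<in> carrier H" and b: "b = \<phi> h a"
    using assms unfolding orbit_def by blast
  obtain k :: nat where k: "\<phi> (inv\<^bsub>H\<^esub> h) c = a [^]\<^bsub>C\<^esub> k"
    using powers_of_generator action_closed h c by blast
  have "c = \<phi> h (a [^]\<^bsub>C\<^esub> k)"
    using orbit_sym_aux[OF H.inv_closed[OF h] c refl] k h by simp
  also have "\<dots> = b [^]\<^bsub>C\<^esub> k"
    using action_hom_pow[OF h generator] b by simp
  finally show ?thesis by blast
qed

lemma action_eq_if_eq_on_generator:
  assumes h: "h \<in> carrier H" and h': "h' \<in> carrier H" and eq: "\<phi> h a = \<phi> h' a"
  shows "\<phi> h = \<phi> h'"
proof (rule extensionalityI)
  show "\<phi> h \<in> extensional (carrier C)" "\<phi> h' \<in> extensional (carrier C)"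
    using bij_prop0 h h' unfolding Bij_def by auto
  fix c assume "c \<in> carrier C"
  then obtain k :: nat where "c = a [^]\<^bsub>C\<^esub> k" using powers_of_generator by blast
  then show "\<phi> h c = \<phi> h' c"
    using action_hom_pow[OF h generator] action_hom_pow[OF h' generator] eq by simp
qed

text \<open>For \<open>b\<close> in the orbit of \<open>a\<close> (a generator of \<open>C\<close>) and a primitive \<open>ord a\<close>-th root of unity
  \<open>z\<close>, \<open>character z b\<close> is the character of \<open>C\<close> with \<open>b \<mapsto> z\<close>: the chosen exponent only matters
  modulo \<open>ord a\<close>.\<close>

definition character :: "complex \<Rightarrow> _ \<Rightarrow> _ \<Rightarrow> complex" where
  "character z b c = z ^ (SOME k::nat. c = b [^]\<^bsub>C\<^esub> k)"

context
  fixes z :: complex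
  assumes z: "primitive_root_of_unity (C.ord a) z"
begin

lemma character_pow:
  assumes b: "b \<in> orbit H \<phi> a"
  shows "character z b (b [^]\<^bsub>C\<^esub> (k::nat)) = z ^ k"
proof -
  let ?k = "SOME k'::nat. b [^]\<^bsub>C\<^esub> k = b [^]\<^bsub>C\<^esub> k'"
  have "b [^]\<^bsub>C\<^esub> k = b [^]\<^bsub>C\<^esub> ?k" by (rule someI[of _ k]) (rule refl)
  then have "z ^ ?k = z ^ k"
    using orbit_pow_eq_iff[OF b] primitive_root_of_unity_power_eq_iff[OF z ord_generator_pos] by simp
  then show ?thesis unfolding character_def by simp
qed

lemma character_mult:
  assumes b: "b \<in> orbit H \<phi> a" and c: "c \<in> carrier C" and c': "c' \<in> carrier C"
  shows "character z b (c \<otimes>\<^bsub>C\<^esub> c') = character z b c * character z b c'"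
proof -
  obtain k k' :: nat where "c = b [^]\<^bsub>C\<^esub> k" "c' = b [^]\<^bsub>C\<^esub> k'"
    using powers_of_orbit[OF b] c c' by meson
  moreover have "b [^]\<^bsub>C\<^esub> k \<otimes>\<^bsub>C\<^esub> b [^]\<^bsub>C\<^esub> k' = b [^]\<^bsub>C\<^esub> (k + k')"
    using b orbit_subset_carrier by (auto simp: C.nat_pow_mult)
  ultimately show ?thesis using character_pow[OF b] by (simp add: power_add)
qed

lemma character_action:
  assumes h: "h \<in> carrier H" and b: "b \<in> orbit H \<phi> a" and c: "c \<in> carrier C"
  shows "character z (\<phi> h b) (\<phi> h c) = character z b c"
proof -
  obtain k :: nat where k: "c = b [^]\<^bsub>C\<^esub> k" using powers_of_orbit[OF b c] by blast
  then have "\<phi> h c = \<phi> h b [^]\<^bsub>C\<^esub> k"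
    using action_hom_pow[OF h] b orbit_subset_carrier by auto
  then show ?thesis using character_pow orbit_closed[OF h b] b k by simp
qed

lemma character_one: "b \<in> orbit H \<phi> a \<Longrightarrow> character z b \<one>\<^bsub>C\<^esub> = 1"
  using character_pow[of b 0] by simp

lemma character_nonzero: "character z b c \<noteq> 0"
  using z ord_generator_pos unfolding character_def primitive_root_of_unity_def
  by (metis dvd_refl power_0_left power_eq_0_iff zero_neq_one neq0_conv)

lemma character_inj:
  assumes b: "b \<in> orbit H \<phi> a" and c: "c \<in> carrier C" and c': "c' \<in> carrier C"
    and eq: "character z b c = character z b c'"
  shows "c = c'"
proof -
  obtain k k' :: nat where "c = b [^]\<^bsub>C\<^esub> k" "c' = b [^]\<^bsub>C\<^esub> k'"
    using powers_of_orbit[OF b] c c' by meson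
  with eq show ?thesis
    using character_pow[OF b] orbit_pow_eq_iff[OF b]
      primitive_root_of_unity_power_eq_iff[OF z ord_generator_pos] by simp
qed

end

end

context cyclic_semidirect_action
begin

text \<open>The representation \<open>(c, h) e\<^sub>b = character z (h b) c \<cdot> e\<^bsub>h b\<^esub>\<close> on the space with basis
  \<open>orbit H \<phi> a\<close>, enumerated by \<open>f\<close>.\<close>

definition orbit_rep :: "complex \<Rightarrow> (nat \<Rightarrow> _) \<Rightarrow> _ \<times> _ \<Rightarrow> complex mat" where
  "orbit_rep z f g =
     monomial_mat (card (orbit H \<phi> a)) f (\<phi> (snd g)) (\<lambda>b. character z (\<phi> (snd g) b) (fst g))"

context
  fixes z :: complex and f
  assumes z: "primitive_root_of_unity (C.ord a) z"
    and f: "bij_betw f {0..<card (orbit H \<phi> a)} (orbit H \<phi> a)"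
begin

lemma complex_rep_orbit_rep: "complex_rep G (card (orbit H \<phi> a)) (orbit_rep z f)"
  unfolding orbit_rep_def
proof (rule complex_rep_monomial[OF f])
  fix g b assume "g \<in> carrier G" "b \<in> orbit H \<phi> a"
  then show "\<phi> (snd g) b \<in> orbit H \<phi> a" using orbit_closed by auto
next
  fix g g' b assume "g \<in> carrier G" "g' \<in> carrier G" and b: "b \<in> orbit H \<phi> a"
  then obtain x h x' h' where gg': "g = (x, h)" "g' = (x', h')"
    and x: "x \<in> carrier C" "x' \<in> carrier C" and h: "h \<in> carrier H" "h' \<in> carrier H" by auto
  have bC: "b \<in> carrier C" and hb: "\<phi> h' b \<in> orbit H \<phi> a"
    using b orbit_subset_carrier orbit_closed[OF h(2) b] by auto
  have "character z (\<phi> h (\<phi> h' b)) (x \<otimes>\<^bsub>C\<^esub> \<phi> h x') =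
      character z (\<phi> h (\<phi> h' b)) x * character z (\<phi> h (\<phi> h' b)) (\<phi> h x')"
    using character_mult[OF z orbit_closed[OF h(1) hb] x(1) action_closed[OF h(1) x(2)]] .
  also have "character z (\<phi> h (\<phi> h' b)) (\<phi> h x') = character z (\<phi> h' b) x'"
    using character_action[OF z h(1) hb x(2)] .
  finally show "\<phi> (snd (g \<otimes>\<^bsub>G\<^esub> g')) b = \<phi> (snd g) (\<phi> (snd g') b) \<and>
      character z (\<phi> (snd (g \<otimes>\<^bsub>G\<^esub> g')) b) (fst (g \<otimes>\<^bsub>G\<^esub> g')) =
      character z (\<phi> (snd g) (\<phi> (snd g') b)) (fst g) * character z (\<phi> (snd g') b) (fst g')"
    using gg' h bC by (simp add: composition_rule)
next
  fix b assume "b \<in> orbit H \<phi> a"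
  then show "\<phi> (snd \<one>\<^bsub>G\<^esub>) b = b \<and> character z (\<phi> (snd \<one>\<^bsub>G\<^esub>) b) (fst \<one>\<^bsub>G\<^esub>) = 1"
    using orbit_subset_carrier character_one[OF z] by (auto simp: action_one)
qed

lemma inj_on_orbit_rep:
  assumes faithful: "inj_on \<phi> (carrier H)"
  shows "inj_on (orbit_rep z f) (carrier G)"
proof (rule inj_onI)
  fix g g' assume "g \<in> carrier G" "g' \<in> carrier G" and eq: "orbit_rep z f g = orbit_rep z f g'"
  then obtain x h x' h' where gg': "g = (x, h)" "g' = (x', h')"
    and x: "x \<in> carrier C" "x' \<in> carrier C" and h: "h \<in> carrier H" "h' \<in> carrier H" by auto
  have a_orbit: "a \<in> orbit H \<phi> a" using orbit_refl[OF generator] .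
  note eq' = eq[unfolded orbit_rep_def gg' fst_conv snd_conv]
  have "\<phi> h' a = \<phi> h a" and "character z (\<phi> h' a) x' = character z (\<phi> h a) x"
    using monomial_mat_eqD[OF f a_orbit _ _ eq'] orbit_closed[OF h(1) a_orbit] character_nonzero[OF z]
    by simp_all
  moreover have "h = h'"
    using action_eq_if_eq_on_generator[OF h] inj_onD[OF faithful _ h] calculation(1) by metis
  ultimately have "x = x'"
    using character_inj[OF z orbit_closed[OF h(1) a_orbit] x] by simp
  with \<open>h = h'\<close> show "g = g'" using gg' by simp
qed

end

lemma ex_faithful_rep_card_orbit:
  assumes "inj_on \<phi> (carrier H)"
  shows "\<exists>\<rho>. faithful_complex_rep G (card (orbit H \<phi> a)) \<rho>"
proof -
  obtain z :: complex where z: "primitive_root_of_unity (C.ord a) z"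
    using ex_primitive_root_of_unity[OF ord_generator_pos] by blast
  obtain f where f: "bij_betw f {0..<card (orbit H \<phi> a)} (orbit H \<phi> a)"
    using ex_bij_betw_nat_finite[OF finite_orbit] by blast
  show ?thesis
    using complex_rep_orbit_rep[OF z f] inj_on_orbit_rep[OF z f assms]
    unfolding faithful_complex_rep_def by blast
qed

lemma eigenvalue_pow_of_orbit_element:
  assumes rep: "complex_rep G d \<rho>" and ev: "eigenvalue (\<rho> (a, \<one>\<^bsub>H\<^esub>)) \<mu>"
    and b: "b \<in> orbit H \<phi> a" and k: "b = a [^]\<^bsub>C\<^esub> (k::nat)"
  shows "eigenvalue (\<rho> (a, \<one>\<^bsub>H\<^esub>)) (\<mu> ^ k)"
proof -
  obtain h where h: "h \<in> carrier H" and "b = \<phi> h a"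
    using b unfolding orbit_def by blast
  have h_inv: "inv\<^bsub>H\<^esub> h \<in> carrier H" using h by simp
  have "(a, \<one>\<^bsub>H\<^esub>) \<otimes>\<^bsub>G\<^esub> (\<one>\<^bsub>C\<^esub>, inv\<^bsub>H\<^esub> h) = (a, inv\<^bsub>H\<^esub> h)"
    using generator h_inv by (simp add: action_one)
  also have "\<dots> = (\<one>\<^bsub>C\<^esub>, inv\<^bsub>H\<^esub> h) \<otimes>\<^bsub>G\<^esub> (a, \<one>\<^bsub>H\<^esub>) [^]\<^bsub>G\<^esub> k"
    using orbit_sym_aux[OF h generator] \<open>b = \<phi> h a\<close> k generator h_inv
    by (simp add: semidirect_pow_left action_closed)
  finally have conj: "(a, \<one>\<^bsub>H\<^esub>) \<otimes>\<^bsub>G\<^esub> (\<one>\<^bsub>C\<^esub>, inv\<^bsub>H\<^esub> h) =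
      (\<one>\<^bsub>C\<^esub>, inv\<^bsub>H\<^esub> h) \<otimes>\<^bsub>G\<^esub> (a, \<one>\<^bsub>H\<^esub>) [^]\<^bsub>G\<^esub> k" .
  have inv: "(\<one>\<^bsub>C\<^esub>, h) \<otimes>\<^bsub>G\<^esub> (\<one>\<^bsub>C\<^esub>, inv\<^bsub>H\<^esub> h) = \<one>\<^bsub>G\<^esub>"
    using h by (simp add: action_hom_one)
  show ?thesis
    using complex_rep_eigenvalue_pow[OF semidirect_monoid rep _ _ _ inv conj ev] generator h h_inv
    by simp
qed

lemma ex_primitive_eigenvalue_generator:
  assumes p: "Factorial_Ring.prime p" and ord: "C.ord a = p ^ Suc k"
    and faithful: "faithful_complex_rep G d \<rho>"
  shows "\<exists>\<mu>. eigenvalue (\<rho> (a, \<one>\<^bsub>H\<^esub>)) \<mu> \<and> primitive_root_of_unity (C.ord a) \<mu>"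
proof -
  have rep: "complex_rep G d \<rho>" and inj: "inj_on \<rho> (carrier G)"
    using faithful unfolding faithful_complex_rep_def by auto
  let ?A = "\<rho> (a, \<one>\<^bsub>H\<^esub>)"
  have A: "?A \<in> carrier_mat d d" using rep generator unfolding complex_rep_def by simp
  have pow: "\<rho> (c, \<one>\<^bsub>H\<^esub>) ^\<^sub>m j = \<rho> (c [^]\<^bsub>C\<^esub> j, \<one>\<^bsub>H\<^esub>)" if "c \<in> carrier C" for c j
    using complex_rep_pow[OF semidirect_monoid rep, of "(c, \<one>\<^bsub>H\<^esub>)" j]
      semidirect_pow_left[OF that, of j] that by simp
  have A_pow_eq_1: "?A ^\<^sub>m j = 1\<^sub>m d \<longleftrightarrow> p ^ Suc k dvd j" for j
  proof -
    have "?A ^\<^sub>m j = 1\<^sub>m d \<longleftrightarrow> \<rho> (a [^]\<^bsub>C\<^esub> j, \<one>\<^bsub>H\<^esub>) = \<rho> (\<one>\<^bsub>C\<^esub>, \<one>\<^bsub>H\<^esub>)"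
      using pow[OF generator] rep unfolding complex_rep_def by simp
    also have "\<dots> \<longleftrightarrow> a [^]\<^bsub>C\<^esub> j = \<one>\<^bsub>C\<^esub>"
      using inj_on_eq_iff[OF inj] generator by simp
    also have "\<dots> \<longleftrightarrow> p ^ Suc k dvd j"
      using C.pow_eq_id[OF generator] ord by simp
    finally show ?thesis .
  qed
  have "(?A ^\<^sub>m (p ^ k)) ^\<^sub>m p = ?A ^\<^sub>m (p ^ k * p)"
    using pow generator by (simp add: C.nat_pow_pow)
  then have period: "(?A ^\<^sub>m (p ^ k)) ^\<^sub>m p = 1\<^sub>m d"
    using A_pow_eq_1 by (simp add: power_Suc2)
  have "\<not> p ^ Suc k dvd p ^ k"
    using power_dvd_imp_le[OF _ prime_gt_1_nat[OF p]] by fastforce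
  then have nontrivial: "?A ^\<^sub>m (p ^ k) \<noteq> 1\<^sub>m d"
    using A_pow_eq_1 by blast
  show ?thesis
    using ex_primitive_eigenvalue[OF p A period nontrivial] ord by simp
qed

lemma card_orbit_le_faithful_dim:
  assumes p: "Factorial_Ring.prime p" and ord: "C.ord a = p ^ Suc k"
    and faithful: "faithful_complex_rep G d \<rho>"
  shows "card (orbit H \<phi> a) \<le> d"
proof -
  have rep: "complex_rep G d \<rho>"
    using faithful unfolding faithful_complex_rep_def by auto
  let ?A = "\<rho> (a, \<one>\<^bsub>H\<^esub>)"
  have A: "?A \<in> carrier_mat d d" using rep generator unfolding complex_rep_def by simp
  obtain \<mu> where ev: "eigenvalue ?A \<mu>" and \<mu>: "primitive_root_of_unity (C.ord a) \<mu>"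
    using ex_primitive_eigenvalue_generator[OF p ord faithful] by blast
  have "eigenvalue ?A (character \<mu> a b)" if b: "b \<in> orbit H \<phi> a" for b
  proof -
    obtain j :: nat where j: "b = a [^]\<^bsub>C\<^esub> j"
      using powers_of_generator b orbit_subset_carrier by blast
    then show ?thesis
      using eigenvalue_pow_of_orbit_element[OF rep ev b j] character_pow[OF \<mu> orbit_refl[OF generator]]
      by simp
  qed
  then have "character \<mu> a ` orbit H \<phi> a \<subseteq> spectrum ?A"
    unfolding spectrum_def by blast
  moreover have "inj_on (character \<mu> a) (orbit H \<phi> a)"
    using character_inj[OF \<mu> orbit_refl[OF generator]] orbit_subset_carrier
    by (meson inj_onI subsetD)
  ultimately have "card (orbit H \<phi> a) \<le> card (spectrum ?A)"
    using card_inj_on_le[OF _ _ card_finite_spectrum(1)[OF A]] by blast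
  also have "\<dots> \<le> d" using card_finite_spectrum(2)[OF A] .
  finally show ?thesis .
qed

end

lemma (in group) generator_powers_and_ord:
  assumes fin: "finite (carrier G)" and a: "a \<in> carrier G" and gen: "subgroup_generated G {a} = G"
  shows "c \<in> carrier G \<Longrightarrow> \<exists>k::nat. c = a [^] k" and "ord a = order G"
proof -
  have carrier: "generate G {a} = carrier G"
    using arg_cong[OF gen, of carrier] a by (simp add: carrier_subgroup_generated)
  show "c \<in> carrier G \<Longrightarrow> \<exists>k::nat. c = a [^] k"
    using generate_pow_on_finite_carrier[OF fin a] carrier by blast
  show "ord a = order G"
    using generate_pow_card[OF a] carrier unfolding Coset.order_def by simp
qed

theorem proposition1p4:
  fixes C :: "('c, 'x) monoid_scheme" and H :: "('h, 'y) monoid_scheme"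
    and \<phi> :: "'h \<Rightarrow> 'c \<Rightarrow> 'c" and a :: 'c and p n :: nat
  assumes "Factorial_Ring.prime p" and "n \<ge> 1"
    and "group C" and "a \<in> carrier C" and "subgroup_generated C {a} = C"
    and "finite (carrier C)" and "order C = p ^ n"
    and "group H" and "finite (carrier H)"
    and "group_action H (carrier C) \<phi>"
    and "\<forall>h \<in> carrier H. \<phi> h \<in> hom C C"
  shows "m_faithful (semidirect_prod C H \<phi>) \<ge> card {\<phi> h a | h. h \<in> carrier H} \<and>
         (inj_on \<phi> (carrier H) \<longrightarrow>
          m_faithful (semidirect_prod C H \<phi>) = card {\<phi> h a | h. h \<in> carrier H})"
proof -
  note cyclic = group.generator_powers_and_ord[OF \<open>group C\<close> \<open>finite (carrier C)\<close> \<open>a \<in> carrier C\<close>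
      \<open>subgroup_generated C {a} = C\<close>]
  interpret cyclic_semidirect_action C H \<phi> a
    by (intro cyclic_semidirect_action.intro semidirect_action.intro semidirect_action_axioms.intro
        cyclic_semidirect_action_axioms.intro) (use assms cyclic(1) in auto)
  obtain k where "n = Suc k" using \<open>n \<ge> 1\<close> by (cases n) auto
  with cyclic(2) \<open>order C = p ^ n\<close> have ord: "C.ord a = p ^ Suc k" by simp
  let ?G = "semidirect_prod C H \<phi>"
  \<comment> \<open>without any faithful representation the \<open>LEAST\<close> defining \<open>m_faithful\<close> would be arbitrary\<close>
  have "\<exists>d \<rho>. faithful_complex_rep ?G d \<rho>"
    using ex_faithful_complex_rep[OF semidirect_monoid] finite_carrier \<open>finite (carrier H)\<close> by simp
  then have "\<exists>\<rho>. faithful_complex_rep ?G (m_faithful ?G) \<rho>"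
    unfolding m_faithful_def by (rule LeastI_ex)
  then obtain \<rho> where \<rho>: "faithful_complex_rep ?G (m_faithful ?G) \<rho>" ..
  have lower: "card (orbit H \<phi> a) \<le> m_faithful ?G"
    using card_orbit_le_faithful_dim[OF \<open>Factorial_Ring.prime p\<close> ord \<rho>] .
  have upper: "m_faithful ?G \<le> card (orbit H \<phi> a)" if "inj_on \<phi> (carrier H)"
    using ex_faithful_rep_card_orbit[OF that] unfolding m_faithful_def by (blast intro: Least_le)
  show ?thesis
    unfolding orbit_def[symmetric] using lower upper by auto
qed

end
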